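(* Let $n>1$ be a natural number and $\Psi_n(t) = 1+t+\cdots+t^{n-1}$. Then $\operatorname{Discr}_\ast(\Psi_n(t)) = n^{n-2}$ and $\operatorname{Prod}_\ast(\Psi_n(t)) = n^{n-1}$; in particular $\operatorname{Discr}_\ast(\Psi_n(t))\cdot\operatorname{Prod}_\ast(\Psi_n(t)) = n^{n-2}\cdot n^{n-1}$.
   Context: For nonconstant $r(t)\in\mathbb{Z}[t]$ of degree $d$ with leading coefficient $a$, distinct roots $\lambda_1,\dots,\lambda_l\in\overline{\mathbb{Q}}$ with multiplicities $m_1,\dots,m_l$, and $m=\max m_i$: $\operatorname{Discr}_\ast(r(t)) := a^{1+2d^2}(m-1)!\prod_{1\le i\ne j\le l}(\lambda_i-\lambda_j)^m$ and $\operatorname{Prod}_\ast(r(t)) := a^{2d^3}\prod_{1\le i,j\le l,\ r(\lambda_i\lambda_j)\ne0}r(\lambda_i\lambda_j)$. *)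

theory Defs
  imports "HOL-Computational_Algebra.Polynomial" Complex_Main
begin

text \<open>Roots are taken in the complex numbers (an algebraically closed field
containing the algebraic closure of the rationals); the quantities below do not
depend on the choice of embedding.\<close>

definition croots :: "int poly \<Rightarrow> complex set" where
  "croots r = {z. poly (map_poly (of_int :: int \<Rightarrow> complex) r) z = 0}"

definition max_mult :: "int poly \<Rightarrow> nat" where
  "max_mult r = Max ((\<lambda>z. order z (map_poly of_int r :: complex poly)) ` croots r)"

definition Discr_star :: "int poly \<Rightarrow> complex" where
  "Discr_star r =
     of_int (lead_coeff r) ^ (1 + 2 * (degree r)^2) * of_nat (fact (max_mult r - 1)) *
     (\<Prod>p \<in> {(x, y). x \<in> croots r \<and> y \<in> croots r \<and> x \<noteq> y}.
        (fst p - snd p) ^ max_mult r)"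

definition Prod_star :: "int poly \<Rightarrow> complex" where
  "Prod_star r =
     of_int (lead_coeff r) ^ (2 * (degree r)^3) *
     (\<Prod>p \<in> {(x, y). x \<in> croots r \<and> y \<in> croots r \<and>
                     poly (map_poly (of_int :: int \<Rightarrow> complex) r) (x * y) \<noteq> 0}.
        poly (map_poly (of_int :: int \<Rightarrow> complex) r) (fst p * snd p))"

definition Psi :: "nat \<Rightarrow> int poly" where
  "Psi n = (\<Sum>i<n. monom 1 i)"

end

theory Submission
  imports Defs "HOL-Computational_Algebra.Fundamental_Theorem_Algebra"
begin

text \<open>Over \<open>\<complex>\<close> we have \<open>(t - 1) \<Psi>\<^sub>n(t) = t\<^sup>n - 1\<close>, so the roots of the monic polynomial
\<open>\<Psi>\<^sub>n\<close> are the \<open>n\<close>-th roots of unity other than \<open>1\<close>, all of them simple, and \<open>Discr\<^sub>*\<close> is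
the plain product of the differences of distinct roots. Differentiating \<open>t\<^sup>n - 1\<close> at a root
\<open>x\<close> gives \<open>(x - 1) \<Prod>\<^sub>y\<^sub>\<noteq>\<^sub>x (x - y) = n x\<^sup>n\<^sup>-\<^sup>1\<close>; multiplying over all roots and using
\<open>\<Prod> (1 - x) = \<Psi>\<^sub>n(1) = n\<close> and \<open>\<Prod> (-x) = \<Psi>\<^sub>n(0) = 1\<close> yields \<open>n\<^sup>n\<^sup>-\<^sup>2\<close>.
For \<open>Prod\<^sub>*\<close>, a product \<open>xy\<close> of two roots is again an \<open>n\<close>-th root of unity, so
\<open>\<Psi>\<^sub>n(xy) \<noteq> 0\<close> forces \<open>y = x\<^sup>-\<^sup>1\<close>; each of these \<open>n - 1\<close> pairs contributes \<open>\<Psi>\<^sub>n(1) = n\<close>.\<close>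

lemma prod_offdiagonal_pairs:
  assumes "finite A"
  shows "(\<Prod>p \<in> {(x, y). x \<in> A \<and> y \<in> A \<and> x \<noteq> y}. f (fst p) (snd p))
           = (\<Prod>x\<in>A. \<Prod>y\<in>A - {x}. f x y)"
proof -
  have "{(x, y). x \<in> A \<and> y \<in> A \<and> x \<noteq> y} = Sigma A (\<lambda>x. A - {x})" by auto
  then show ?thesis using assms by (simp add: prod.Sigma split_def)
qed

lemma power_minus_one_self_power: "((-1 :: 'a::ring_1) ^ m) ^ m = (-1) ^ m"
  by (cases "even m") (simp_all add: power_mult [symmetric])

lemma rsquarefree_mult_right: "rsquarefree (p * q) \<Longrightarrow> rsquarefree q"
  by (auto simp: rsquarefree_def order_mult)

lemma rsquarefree_monom_minus_1: "n > 0 \<Longrightarrow> rsquarefree (monom (1 :: 'a::field_char_0) n - 1)"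
  by (auto simp: rsquarefree_roots pderiv_diff pderiv_monom poly_monom power_0_left)

lemma poly_pderiv_prod_linear_factors:
  fixes R :: "'a::idom set"
  assumes "finite R" "x \<in> R"
  shows "poly (pderiv (\<Prod>z\<in>R. [:-z, 1:])) x = (\<Prod>y\<in>R - {x}. x - y)"
proof -
  have "(\<Prod>z\<in>R. [:-z, 1:]) = [:-x, 1:] * (\<Prod>z\<in>R - {x}. [:-z, 1:])"
    using assms by (simp add: prod.remove)
  then show ?thesis by (simp only: pderiv_mult) (simp add: pderiv_pCons poly_prod)
qed

lemma max_mult_eq_1:
  assumes "rsquarefree (map_poly (of_int :: int \<Rightarrow> complex) r)" "croots r \<noteq> {}"
  shows "max_mult r = 1"
proof -
  have "order z (map_poly of_int r :: complex poly) = 1" if "z \<in> croots r" for z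
    using assms(1) that by (intro rsquarefree_root_order) (auto simp: croots_def rsquarefree_def)
  then have "(\<lambda>z. order z (map_poly of_int r :: complex poly)) ` croots r = {1}"
    using assms(2) by auto
  then show ?thesis by (simp add: max_mult_def)
qed

lemma Discr_star_monic_simple_roots:
  assumes "lead_coeff r = 1" "max_mult r = 1" "finite (croots r)"
  shows "Discr_star r = (\<Prod>x\<in>croots r. \<Prod>y\<in>croots r - {x}. x - y)"
  using assms by (simp add: Discr_star_def prod_offdiagonal_pairs)

lemma coeff_Psi: "coeff (Psi n) i = (if i < n then 1 else 0)"
  by (simp add: Psi_def coeff_sum)

lemma degree_Psi: "n > 0 \<Longrightarrow> degree (Psi n) = n - 1"
  by (intro antisym degree_le le_degree) (auto simp: coeff_Psi)

lemma lead_coeff_Psi: "n > 0 \<Longrightarrow> lead_coeff (Psi n) = 1"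
  by (simp add: degree_Psi coeff_Psi)

lemma poly_Psi: "poly (map_poly (of_int :: int \<Rightarrow> 'a::comm_ring_1) (Psi n)) z = (\<Sum>i<n. z ^ i)"
proof -
  have "map_poly (of_int :: int \<Rightarrow> 'a) (Psi n) = (\<Sum>i<n. monom 1 i)"
    by (rule poly_eqI) (simp add: coeff_map_poly coeff_Psi coeff_sum)
  then show ?thesis by (simp add: poly_sum poly_monom)
qed

abbreviation Psi_complex :: "nat \<Rightarrow> complex poly" where
  "Psi_complex n \<equiv> map_poly of_int (Psi n)"

lemma degree_Psi_complex: "degree (Psi_complex n) = degree (Psi n)"
  by (rule degree_map_poly) simp

lemma Psi_complex_mult_linear_factor: "[:-1, 1:] * Psi_complex n = monom 1 n - 1"
proof -
  have "poly ([:-1, 1:] * Psi_complex n) z = poly (monom 1 n - 1) z" for z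
    using power_diff_1_eq[of z n] by (simp add: poly_Psi poly_monom algebra_simps)
  then have "poly ([:-1, 1:] * Psi_complex n) = poly (monom 1 n - 1)" ..
  then show ?thesis by (simp add: poly_eq_poly_eq_iff)
qed

lemma rsquarefree_Psi_complex: "n > 0 \<Longrightarrow> rsquarefree (Psi_complex n)"
  using rsquarefree_monom_minus_1 rsquarefree_mult_right Psi_complex_mult_linear_factor by metis

lemma croots_Psi:
  assumes "n > 0"
  shows "croots (Psi n) = {z. z ^ n = 1 \<and> z \<noteq> 1}"
proof -
  have "poly (Psi_complex n) z = 0 \<longleftrightarrow> z ^ n = 1 \<and> z \<noteq> 1" for z
    using power_diff_1_eq[of z n] assms by (cases "z = 1") (auto simp: poly_Psi)
  then show ?thesis by (auto simp: croots_def)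
qed

lemma Psi_complex_eq_prod:
  assumes "n > 0"
  shows "Psi_complex n = (\<Prod>z\<in>croots (Psi n). [:-z, 1:])"
proof -
  have "lead_coeff (Psi_complex n) = 1"
    using assms by (simp add: degree_Psi_complex coeff_map_poly lead_coeff_Psi)
  then show ?thesis
    using complex_poly_decompose_rsquarefree[OF rsquarefree_Psi_complex[OF assms]]
    by (simp add: croots_def)
qed

lemma poly_Psi_complex_eq_prod:
  "n > 0 \<Longrightarrow> poly (Psi_complex n) c = (\<Prod>x\<in>croots (Psi n). c - x)"
  by (simp add: Psi_complex_eq_prod poly_prod)

lemma finite_croots_Psi: "n > 0 \<Longrightarrow> finite (croots (Psi n))"
  by (simp add: croots_Psi finite_roots_unity)

lemma card_croots_Psi: "n > 0 \<Longrightarrow> card (croots (Psi n)) = n - 1"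
  using degree_prod_sum_eq[of "croots (Psi n)" "\<lambda>z. [:-z, 1 :: complex:]"]
  by (simp add: Psi_complex_eq_prod [symmetric] degree_Psi_complex degree_Psi)

lemma prod_croots_Psi:
  assumes "n > 0"
  shows "(\<Prod>x\<in>croots (Psi n). x) = (-1) ^ (n - 1)"
    and "(\<Prod>x\<in>croots (Psi n). x - 1) = (-1) ^ (n - 1) * of_nat n"
proof -
  let ?R = "croots (Psi n)"
  have minus_prod: "(\<Prod>x\<in>?R. - f x) = (-1) ^ (n - 1) * (\<Prod>x\<in>?R. f x)" for f :: "complex \<Rightarrow> complex"
    using prod.distrib[of "\<lambda>_. -1" f ?R] assms by (simp add: card_croots_Psi)
  have "(\<Prod>x\<in>?R. 0 - x) = 1" "(\<Prod>x\<in>?R. 1 - x) = of_nat n"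
    using poly_Psi_complex_eq_prod[OF assms, of 0] poly_Psi_complex_eq_prod[OF assms, of 1] assms
    by (simp_all add: poly_Psi poly_0_coeff_0 coeff_map_poly coeff_Psi)
  then show "(\<Prod>x\<in>?R. x) = (-1) ^ (n - 1)" "(\<Prod>x\<in>?R. x - 1) = (-1) ^ (n - 1) * of_nat n"
    using minus_prod[of uminus] minus_prod[of "\<lambda>x. 1 - x"] by simp_all
qed

lemma linear_factor_times_prod_diff_croots_Psi:
  assumes "n > 0" "x \<in> croots (Psi n)"
  shows "(x - 1) * (\<Prod>y\<in>croots (Psi n) - {x}. x - y) = of_nat n * x ^ (n - 1)"
proof -
  let ?R = "croots (Psi n)"
  let ?U = "insert 1 ?R"
  have U: "finite ?U" "x \<in> ?U" "1 \<notin> ?R"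
    using assms by (auto simp: finite_croots_Psi croots_Psi)
  have "(\<Prod>z\<in>?U. [:-z, 1:]) = [:-1, 1:] * (\<Prod>z\<in>?R. [:-z, 1:])"
    using finite_croots_Psi[OF assms(1)] U(3) by (rule prod.insert)
  also have "\<dots> = monom 1 n - 1"
    by (simp only: Psi_complex_eq_prod[OF assms(1), symmetric] Psi_complex_mult_linear_factor)
  finally have "poly (pderiv (monom 1 n - 1)) x = (\<Prod>y\<in>?U - {x}. x - y)"
    using poly_pderiv_prod_linear_factors[OF U(1,2)] by simp
  also have "?U - {x} = insert 1 (?R - {x})" using U assms(2) by auto
  finally show ?thesis
    using U by (simp add: pderiv_diff pderiv_monom poly_monom)
qed

lemma Discr_star_Psi:
  assumes "n > 1"
  shows "Discr_star (Psi n) = of_nat n ^ (n - 2)"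
proof -
  let ?R = "croots (Psi n)" and ?s = "(-1 :: complex) ^ (n - 1)"
  define D where "D = (\<Prod>x\<in>?R. \<Prod>y\<in>?R - {x}. x - y)"
  have n0: "n > 0" and card: "card ?R = n - 1"
    using assms card_croots_Psi by auto
  have "max_mult (Psi n) = 1"
    using assms card rsquarefree_Psi_complex by (intro max_mult_eq_1) auto
  then have Discr: "Discr_star (Psi n) = D"
    using n0 by (simp add: D_def Discr_star_monic_simple_roots lead_coeff_Psi finite_croots_Psi)
  have "?s * of_nat n * D = (\<Prod>x\<in>?R. (x - 1) * (\<Prod>y\<in>?R - {x}. x - y))"
    by (simp only: D_def prod_croots_Psi(2)[OF n0, symmetric] prod.distrib)
  also have "\<dots> = (\<Prod>x\<in>?R. of_nat n * x ^ (n - 1))"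
    using linear_factor_times_prod_diff_croots_Psi[OF n0] by simp
  also have "\<dots> = of_nat n ^ (n - 1) * (\<Prod>x\<in>?R. x) ^ (n - 1)"
    by (simp add: prod.distrib card prod_power_distrib)
  also have "\<dots> = ?s * of_nat n * of_nat n ^ (n - 2)"
    using power_minus_mult[of "n - 1" "of_nat n :: complex"] assms
    by (simp add: prod_croots_Psi(1)[OF n0] power_minus_one_self_power numeral_2_eq_2 mult_ac)
  finally show ?thesis using n0 by (simp add: Discr)
qed

lemma Prod_star_Psi:
  assumes "n > 0"
  shows "Prod_star (Psi n) = of_nat n ^ (n - 1)"
proof -
  let ?R = "croots (Psi n)"
  have root_iff: "poly (Psi_complex n) z = 0 \<longleftrightarrow> z ^ n = 1 \<and> z \<noteq> 1" for z
    using croots_Psi[OF assms] by (auto simp: croots_def)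
  have nonzero: "x \<noteq> 0" if "x \<in> ?R" for x
    using that assms by (auto simp: croots_Psi power_0_left)
  have Psi_at_1: "poly (Psi_complex n) (x * inverse x) = of_nat n" if "x \<in> ?R" for x
    using nonzero[OF that] by (simp add: poly_Psi)
  have "{(x, y). x \<in> ?R \<and> y \<in> ?R \<and> poly (Psi_complex n) (x * y) \<noteq> 0}
          = (\<lambda>x. (x, inverse x)) ` ?R"
  proof -
    have "y = inverse x" if "x \<in> ?R" "y \<in> ?R" "poly (Psi_complex n) (x * y) \<noteq> 0" for x y
      using that root_iff[of "x * y"] assms
      by (auto simp: croots_Psi power_mult_distrib inverse_unique)
    moreover have "inverse x \<in> ?R" if "x \<in> ?R" for x
      using that assms by (auto simp: croots_Psi power_inverse)
    ultimately show ?thesis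
      using Psi_at_1 assms by fastforce
  qed
  then show ?thesis
    using assms Psi_at_1
    by (simp add: Prod_star_def lead_coeff_Psi prod.reindex inj_on_def card_croots_Psi)
qed

theorem proposition4p12:
  fixes n :: nat
  assumes "n > 1"
  shows "Discr_star (Psi n) = of_nat n ^ (n - 2)
       \<and> Prod_star (Psi n) = of_nat n ^ (n - 1)
       \<and> Discr_star (Psi n) * Prod_star (Psi n) = of_nat n ^ (n - 2) * of_nat n ^ (n - 1)"
  using Discr_star_Psi[OF assms] Prod_star_Psi[of n] assms by simp

end
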